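(* Let $E$ be a Banach space and let $G:E\times\mathbb{R}\to E\times\mathbb{R}$, $G(e,t)=(e,g(e,t))$, be a continuous proper map. Suppose that no point of $E\times\mathbb{R}$ has three preimages under $G$. If some point has two preimages, then $G$ is a global fold, that is, there are homeomorphisms $\sigma_1,\sigma_2:E\times\mathbb{R}\to E\times\mathbb{R}$ of the form $\sigma_1(e,t)=(e,g_1(e,t))$, $\sigma_2(e,t)=(e,g_2(e,t))$ such that $(\sigma_2\circ G\circ\sigma_1)(e,t)=(e,-|t|)$ for all $(e,t)$. Otherwise, $G$ is a homeomorphism.
   Context: A continuous map is proper if preimages of compact sets are compact. *)

theory Defs
  imports "HOL-Analysis.Analysis"
begin

definition proper_cont_map :: "('a::topological_space \<Rightarrow> 'b::topological_space) \<Rightarrow> bool" where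
  "proper_cont_map f \<longleftrightarrow> continuous_on UNIV f \<and> (\<forall>K. compact K \<longrightarrow> compact (f -` K))"

definition fibre_map :: "('a \<times> real \<Rightarrow> real) \<Rightarrow> 'a \<times> real \<Rightarrow> 'a \<times> real" where
  "fibre_map h = (\<lambda>(e,t). (e, h (e,t)))"

definition is_homeo :: "('a::topological_space \<Rightarrow> 'b::topological_space) \<Rightarrow> bool" where
  "is_homeo f \<longleftrightarrow> (\<exists>f'. homeomorphism UNIV UNIV f f')"

definition global_fold :: "('a::real_normed_vector \<times> real \<Rightarrow> 'a \<times> real) \<Rightarrow> bool" where
  "global_fold G \<longleftrightarrow> (\<exists>g1 g2. is_homeo (fibre_map g1) \<and> is_homeo (fibre_map g2) \<and>
      (\<forall>e t. (fibre_map g2 \<circ> G \<circ> fibre_map g1) (e,t) = (e, - \<bar>t\<bar>)))"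

end

theory Submission
  imports Defs
begin

text \<open>
  Every fibre map \<open>t \<mapsto> g (e, t)\<close> is a proper continuous function on \<open>\<real>\<close> taking no value
  three times. Such a function is injective, or has a hump (a strict global maximum, strictly
  monotone on both sides, tending to \<open>-\<infinity>\<close> at both ends), or has a dip (a hump of its negative).
  Having a hump is an open condition in \<open>e\<close>; so is not having one, because the images under \<open>G\<close>
  of the closed half-spaces \<open>t \<ge> b\<close> and \<open>t \<le> a\<close> are closed. As \<open>E\<close> is connected, either all
  fibres have humps or none has. If all have, the peak height \<open>M e\<close> and the peak position
  depend continuously on \<open>e\<close>, and the signed depth below the peak is a fibrewise coordinate
  in which \<open>G\<close> reads \<open>(e, s) \<mapsto> (e, M e - \<bar>s\<bar>)\<close>; translating by \<open>M\<close> gives the fold. If \<open>G\<close> is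
  injective, each fibre map is an injective proper map \<open>\<real> \<rightarrow> \<real>\<close>, hence onto, and \<open>G\<close> is a
  proper continuous bijection, hence a homeomorphism.
\<close>

lemma fibre_map_apply [simp]: "fibre_map h (e, t) = (e, h (e, t))"
  by (simp add: fibre_map_def)

lemma fibre_map_eq: "fibre_map h = (\<lambda>x. (fst x, h x))"
  by (auto simp: fibre_map_def)

lemma range_fibre_map_iff: "(e, v) \<in> range (fibre_map h) \<longleftrightarrow> (\<exists>t. h (e, t) = v)"
proof
  assume "(e, v) \<in> range (fibre_map h)"
  then obtain x where "(e, v) = fibre_map h x"
    by blast
  then show "\<exists>t. h (e, t) = v"
    by (cases x) auto
next
  assume "\<exists>t. h (e, t) = v"
  then obtain t where "h (e, t) = v"
    by blast
  then show "(e, v) \<in> range (fibre_map h)"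
    by (intro rev_image_eqI[of "(e, t)"]) auto
qed

lemma negate_snd_negate_snd [simp]:
  "fibre_map (\<lambda>x. - snd x) (fibre_map (\<lambda>x. - snd x) x) = x"
  by (simp add: fibre_map_eq)

lemma fibre_map_negate: "fibre_map (\<lambda>x. - g x) = fibre_map (\<lambda>x. - snd x) \<circ> fibre_map g"
  by (simp add: fibre_map_eq comp_def)

lemma continuous_on_fixed_snd:
  fixes g :: "'a::topological_space \<times> 'b::topological_space \<Rightarrow> 'c::topological_space"
  assumes "continuous_on UNIV g"
  shows "continuous_on UNIV (\<lambda>e. g (e, t))"
  by (rule continuous_on_compose2[OF assms]) (auto intro: continuous_intros)

lemma continuous_on_fixed_fst:
  fixes g :: "'a::topological_space \<times> 'b::topological_space \<Rightarrow> 'c::topological_space"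
  assumes "continuous_on UNIV g"
  shows "continuous_on UNIV (\<lambda>t. g (e, t))"
  by (rule continuous_on_compose2[OF assms]) (auto intro: continuous_intros)

lemma closed_graph_vimage:
  fixes v :: "'a::topological_space \<Rightarrow> 'b::topological_space"
  assumes "continuous_on UNIV v" "closed D"
  shows "closed {e. (e, v e) \<in> D}"
proof -
  have "continuous_on UNIV (\<lambda>e. (e, v e))"
    by (intro continuous_intros assms(1))
  then have "closed ((\<lambda>e. (e, v e)) -` D)"
    using assms(2) unfolding continuous_on_closed_vimage[OF closed_UNIV] by simp
  then show ?thesis
    by (simp add: vimage_def)
qed

lemma closed_image_proper_map:
  fixes f :: "'a::metric_space \<Rightarrow> 'b::metric_space"
  assumes "continuous_on UNIV f" "\<And>K. compact K \<Longrightarrow> compact (f -` K)" "closed C"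
  shows "closed (f ` C)"
proof -
  have "proper_map euclidean euclidean f"
    using assms by (intro compact_imp_proper_map)
      (auto simp: k_space_euclideanreal Hausdorff_imp_kc_space vimage_def)
  then have "closed_map euclidean euclidean f"
    by (rule proper_imp_closed_map)
  then show ?thesis
    using assms(3) by (auto simp: closed_map_def)
qed

lemma is_homeo_proper_bij:
  fixes f :: "'a::metric_space \<Rightarrow> 'a"
  assumes cont: "continuous_on UNIV f" and proper: "\<And>K. compact K \<Longrightarrow> compact (f -` K)"
    and "bij f"
  shows "is_homeo f"
proof -
  have "continuous_on UNIV (inv f)"
    unfolding continuous_on_closed_vimage[OF closed_UNIV]
  proof (intro allI impI)
    fix B :: "'a set"
    assume "closed B"
    moreover have "inv f -` B = f ` B"
      using \<open>bij f\<close> by (auto simp: bij_def image_iff) (metis surj_f_inv_f)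
    ultimately show "closed (inv f -` B \<inter> UNIV)"
      using closed_image_proper_map[OF cont proper] by simp
  qed
  then show ?thesis
    using assms unfolding is_homeo_def homeomorphism_def
    by (intro exI[of _ "inv f"]) (auto simp: bij_is_surj bij_is_inj inj_imp_surj_inv surj_f_inv_f)
qed

lemma homeomorphism_negate_snd:
  "homeomorphism UNIV UNIV (fibre_map (\<lambda>x. - snd x)) (fibre_map (\<lambda>x. - snd x))"
proof -
  have "continuous_on UNIV (fibre_map (\<lambda>x::'a::topological_space \<times> real. - snd x))"
    unfolding fibre_map_eq by (intro continuous_intros)
  moreover have "range (fibre_map (\<lambda>x::'a \<times> real. - snd x)) = UNIV"
    by (metis negate_snd_negate_snd surjI)
  ultimately show ?thesis
    unfolding homeomorphism_def by simp
qed

lemma homeomorphism_fibre_map_inverse: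
  assumes "homeomorphism UNIV UNIV (fibre_map h) k"
  shows "k = fibre_map (\<lambda>y. snd (k y))"
proof
  fix y
  have "fibre_map h (k y) = y"
    using homeomorphism_apply2[OF assms] by simp
  then have "fst (k y) = fst y"
    by (metis fst_conv fibre_map_eq)
  then show "k y = fibre_map (\<lambda>y. snd (k y)) y"
    by (simp add: fibre_map_eq prod_eq_iff)
qed

lemma is_homeo_fibre_map_translate:
  fixes c :: "'a::topological_space \<Rightarrow> real"
  assumes "continuous_on UNIV c"
  shows "is_homeo (fibre_map (\<lambda>y. snd y + c (fst y)))"
proof -
  have "continuous_on UNIV (\<lambda>y::'a \<times> real. c (fst y))"
    by (rule continuous_on_compose2[OF assms]) (auto intro: continuous_intros)
  then have "homeomorphism UNIV UNIV
      (fibre_map (\<lambda>y. snd y + c (fst y))) (fibre_map (\<lambda>y. snd y - c (fst y)))"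
    by (intro homeomorphismI) (auto simp: fibre_map_eq intro!: continuous_intros)
  then show ?thesis
    unfolding is_homeo_def by blast
qed

lemma global_fold_negate:
  fixes g :: "'a::real_normed_vector \<times> real \<Rightarrow> real"
  assumes "global_fold (fibre_map (\<lambda>x. - g x))"
  shows "global_fold (fibre_map g)"
proof -
  obtain g1 g2 where g1: "is_homeo (fibre_map g1)" and g2: "is_homeo (fibre_map g2)"
    and fold: "\<And>e t. (fibre_map g2 \<circ> fibre_map (\<lambda>x. - g x) \<circ> fibre_map g1) (e, t) = (e, - \<bar>t\<bar>)"
    using assms unfolding global_fold_def by blast
  let ?flip = "fibre_map (\<lambda>x::'a \<times> real. - snd x)"
  define g2' where "g2' = (\<lambda>y. g2 (fst y, - snd y))"
  have flip: "fibre_map g2' = fibre_map g2 \<circ> ?flip"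
    by (simp add: fibre_map_eq g2'_def comp_def)
  obtain k where "homeomorphism UNIV UNIV (fibre_map g2) k"
    using g2 unfolding is_homeo_def by blast
  then have "homeomorphism UNIV UNIV (fibre_map g2 \<circ> ?flip) (?flip \<circ> k)"
    by (rule homeomorphism_compose[OF homeomorphism_negate_snd])
  then have "is_homeo (fibre_map g2')"
    unfolding flip is_homeo_def by blast
  moreover have "(fibre_map g2' \<circ> fibre_map g \<circ> fibre_map g1) (e, t) = (e, - \<bar>t\<bar>)" for e t
    using fold[of e t] unfolding flip fibre_map_negate[of g] by simp
  ultimately show ?thesis
    unfolding global_fold_def using g1 by blast
qed

section \<open>Proper real functions taking no value three times\<close>

definition hump :: "(real \<Rightarrow> real) \<Rightarrow> bool" where
  "hump h \<longleftrightarrow> (\<exists>a m b. a < m \<and> m < b \<and> h a < h m \<and> h b < h m)"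

locale proper_two_to_one_fun =
  fixes h :: "real \<Rightarrow> real"
  assumes continuous: "continuous_on UNIV h"
    and bounded_vimage_Icc: "bounded (h -` {c..d})"
    and no_triple_value: "x < y \<Longrightarrow> y < z \<Longrightarrow> h x = h y \<Longrightarrow> h y = h z \<Longrightarrow> False"
begin

lemma IVT_strict:
  assumes "a < b" and "h a < v \<and> v < h b \<or> h b < v \<and> v < h a"
  shows "\<exists>c. a < c \<and> c < b \<and> h c = v"
proof -
  have "continuous_on {a..b} h"
    using continuous continuous_on_subset by blast
  from assms(2) obtain c where "a \<le> c" "c \<le> b" "h c = v"
  proof
    assume "h a < v \<and> v < h b"
    then show thesis
      using IVT'[of h a v b] \<open>continuous_on {a..b} h\<close> that assms(1) by auto
  next
    assume "h b < v \<and> v < h a"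
    then show thesis
      using IVT2'[of h b v a] \<open>continuous_on {a..b} h\<close> that assms(1) by auto
  qed
  moreover have "c \<noteq> a" "c \<noteq> b"
    using assms(2) \<open>h c = v\<close> by auto
  ultimately show ?thesis
    by force
qed

lemma reflect: "proper_two_to_one_fun (\<lambda>t. h (- t))"
proof
  show "continuous_on UNIV (\<lambda>t. h (- t))"
    by (rule continuous_on_compose2[OF continuous]) (auto intro: continuous_intros)
  fix c d
  obtain R where R: "\<forall>y \<in> h -` {c..d}. norm y \<le> R"
    using bounded_vimage_Icc bounded_iff by blast
  have "norm t \<le> R" if "h (- t) \<in> {c..d}" for t
    using R[rule_format, of "- t"] that by simp
  then show "bounded ((\<lambda>t. h (- t)) -` {c..d})"
    unfolding bounded_iff by blast
next
  fix x y z :: real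
  assume "x < y" "y < z" "h (- x) = h (- y)" "h (- y) = h (- z)"
  then show False
    using no_triple_value[of "- z" "- y" "- x"] by simp
qed

lemma negate: "proper_two_to_one_fun (\<lambda>t. - h t)"
proof
  show "continuous_on UNIV (\<lambda>t. - h t)"
    by (intro continuous_intros continuous)
  fix c d
  have "(\<lambda>t. - h t) -` {c..d} = h -` {- d..- c}"
    by auto
  then show "bounded ((\<lambda>t. - h t) -` {c..d})"
    using bounded_vimage_Icc by simp
qed (use no_triple_value in simp)

lemma below_far_right:
  assumes "\<And>w. h w \<le> B"
  shows "\<exists>p \<ge> x. h p < c"
proof -
  obtain R where R: "\<forall>y \<in> h -` {c..B}. norm y \<le> R"
    using bounded_vimage_Icc[of c B] unfolding bounded_iff by blast
  define p where "p = max x (R + 1)"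
  have "R < norm p"
    by (simp add: p_def)
  then have "\<not> h p \<in> {c..B}"
    using R[rule_format, of p] by auto
  then show ?thesis
    using assms[of p] by (intro exI[of _ p]) (auto simp: p_def)
qed

lemma below_far_left:
  assumes "\<And>w. h w \<le> B"
  shows "\<exists>p \<le> x. h p < c"
proof -
  interpret reflected: proper_two_to_one_fun "\<lambda>t. h (- t)"
    by (rule reflect)
  obtain p where "- x \<le> p" "h (- p) < c"
    using reflected.below_far_right[of B "- x" c] assms by blast
  then show ?thesis
    by (intro exI[of _ "- p"]) auto
qed

lemma hump_imp_maximum:
  assumes "hump h"
  obtains m where "\<And>w. h w \<le> h m"
proof -
  obtain a m0 b where m0: "a < m0" "m0 < b" "h a < h m0" "h b < h m0"
    using assms by (auto simp: hump_def)
  obtain m where m: "a \<le> m" "m \<le> b" "\<And>y. a \<le> y \<Longrightarrow> y \<le> b \<Longrightarrow> h y \<le> h m"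
    using continuous_attains_sup[of "{a..b}" h] m0 continuous_on_subset[OF continuous] by force
  have "h m0 \<le> h m"
    using m m0 by simp
  then have "m \<noteq> a" "m \<noteq> b"
    using m0 by auto
  have "h w \<le> h m" for w
  proof (rule ccontr)
    \<comment> \<open>otherwise a level just below \<open>h m\<close> is crossed on both sides of \<open>m\<close> and again towards \<open>w\<close>\<close>
    assume "\<not> h w \<le> h m"
    define v where "v = (max (h a) (h b) + h m) / 2"
    have v: "h a < v" "h b < v" "v < h m"
      using m0 \<open>h m0 \<le> h m\<close> by (auto simp: v_def)
    obtain c1 where c1: "a < c1" "c1 < m" "h c1 = v"
      using IVT_strict[of a m v] v m \<open>m \<noteq> a\<close> by auto
    obtain c2 where c2: "m < c2" "c2 < b" "h c2 = v"
      using IVT_strict[of m b v] v m \<open>m \<noteq> b\<close> by auto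
    have "w < a \<or> b < w"
      using m(3)[of w] \<open>\<not> h w \<le> h m\<close> by (meson linorder_not_le)
    then show False
    proof
      assume "w < a"
      then obtain c0 where "c0 < a" "h c0 = v"
        using IVT_strict[of w a v] v \<open>\<not> h w \<le> h m\<close> by auto
      then show False
        using no_triple_value[of c0 c1 c2] c1 c2 by auto
    next
      assume "b < w"
      then obtain c3 where "b < c3" "h c3 = v"
        using IVT_strict[of b w v] v \<open>\<not> h w \<le> h m\<close> by auto
      then show False
        using no_triple_value[of c1 c2 c3] c1 c2 by auto
    qed
  qed
  then show thesis
    by (rule that)
qed

context
  fixes m
  assumes maximum: "\<And>w. h w \<le> h m"
begin

lemma maximum_unique:
  assumes "h x = h m"
  shows "x = m"
proof -
  have False if xy: "x < y" "h x = h m" "h y = h m" for x y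
  proof (cases "\<exists>u. x < u \<and> u < y \<and> h u < h m")
    case True
    then obtain u where u: "x < u" "u < y" "h u < h m"
      by blast
    obtain p where p: "p \<le> x" "h p < h u"
      using below_far_left maximum by blast
    define v where "v = (h u + h m) / 2"
    have v: "h p < v" "h u < v" "v < h m"
      using p u by (auto simp: v_def)
    have "p \<noteq> x"
      using p u xy by auto
    obtain c1 where "c1 < x" "h c1 = v"
      using IVT_strict[of p x v] p v xy \<open>p \<noteq> x\<close> by auto
    moreover obtain c2 where "x < c2" "c2 < u" "h c2 = v"
      using IVT_strict[of x u v] u v xy by auto
    moreover obtain c3 where "u < c3" "h c3 = v"
      using IVT_strict[of u y v] u v xy by auto
    ultimately show False
      using no_triple_value[of c1 c2 c3] by auto
  next
    case False
    moreover have "x < (x + y) / 2" "(x + y) / 2 < y"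
      using xy by auto
    ultimately have "\<not> h ((x + y) / 2) < h m"
      by blast
    then have "h ((x + y) / 2) = h m"
      using maximum[of "(x + y) / 2"] by linarith
    then show False
      using no_triple_value[of x "(x + y) / 2" y] xy by auto
  qed
  then show ?thesis
    using assms by (metis linorder_neqE_linordered_idom)
qed

lemma strict_mono_on_atMost: "strict_mono_on {..m} h"
proof -
  have no_repeat: False if xy: "x < y" "y \<le> m" "h x = h y" for x y
  proof -
    have "y \<noteq> m"
      using maximum_unique[of x] xy by force
    then have "h y < h m"
      using maximum_unique[of y] maximum[of y] by fastforce
    obtain q where q: "m \<le> q" "h q < h y"
      using below_far_right[OF maximum, of m "h y"] by blast
    then have "m < q"
      using \<open>h y < h m\<close> by (metis order.not_eq_order_implies_strict order_less_asym)
    then obtain c where "m < c" "h c = h y"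
      using IVT_strict[of m q "h y"] q \<open>h y < h m\<close> by blast
    moreover have "y < c"
      using xy(2) \<open>m < c\<close> by simp
    ultimately show False
      using no_triple_value[OF xy(1) \<open>y < c\<close> xy(3)] by simp
  qed
  have "inj_on h {..m}"
  proof (rule inj_onI)
    fix x y
    assume "x \<in> {..m}" "y \<in> {..m}" "h x = h y"
    then show "x = y"
      using no_repeat[of x y] no_repeat[of y x] by (cases x y rule: linorder_cases) auto
  qed
  then have "strict_mono_on {..m} h \<or> strict_antimono_on {..m} h"
    using injective_eq_monotone_map[OF is_interval_ic continuous_on_subset[OF continuous]] by blast
  moreover have "\<not> strict_antimono_on {..m} h"
  proof
    assume "strict_antimono_on {..m} h"
    then have "h m < h (m - 1)"
      using monotone_onD[of "{..m}" "(<)" "(>)" h "m - 1" m] by simp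
    then show False
      using maximum[of "m - 1"] by simp
  qed
  ultimately show ?thesis
    by blast
qed

lemma value_below_maximum:
  assumes "v < h m"
  shows "\<exists>t < m. h t = v" "\<exists>t > m. h t = v"
proof -
  obtain p where p: "p \<le> m" "h p < v"
    using below_far_left maximum by blast
  then have "p < m"
    using assms by (cases "p = m") auto
  then show "\<exists>t < m. h t = v"
    using IVT_strict[of p m v] p assms by blast
  obtain q where q: "m \<le> q" "h q < v"
    using below_far_right maximum by blast
  then have "m < q"
    using assms by (cases "q = m") auto
  then show "\<exists>t > m. h t = v"
    using IVT_strict[of m q v] q assms by blast
qed

end

lemma strict_antimono_on_atLeast:
  assumes "\<And>w. h w \<le> h m"
  shows "strict_antimono_on {m..} h"
proof -
  interpret reflected: proper_two_to_one_fun "\<lambda>t. h (- t)"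
    by (rule reflect)
  have "strict_mono_on {..- m} (\<lambda>t. h (- t))"
    using reflected.strict_mono_on_atMost[of "- m"] assms by simp
  show ?thesis
  proof (rule monotone_onI)
    fix x y
    assume "x \<in> {m..}" "y \<in> {m..}" "x < y"
    then show "h y < h x"
      using monotone_onD[OF \<open>strict_mono_on {..- m} _\<close>, of "- y" "- x"] by simp
  qed
qed

lemma hump_imp_value_right:
  assumes "hump h" "a < b" "h a < h b"
  obtains c where "b < c" "h c = h a"
proof -
  obtain m where "\<And>w. h w \<le> h m"
    using hump_imp_maximum assms(1) by blast
  then obtain q where q: "b \<le> q" "h q < h a"
    using below_far_right[of "h m" b "h a"] by blast
  then have "b < q"
    using assms(3) by (cases "q = b") auto
  then show thesis
    using IVT_strict[of b q "h a"] q assms(3) that by blast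
qed

lemma hump_imp_value_left:
  assumes "hump h" "a < b" "h b < h a"
  obtains c where "c < a" "h c = h b"
proof -
  obtain m where "\<And>w. h w \<le> h m"
    using hump_imp_maximum assms(1) by blast
  then obtain p where p: "p \<le> a" "h p < h b"
    using below_far_left[of "h m" a "h b"] by blast
  then have "p < a"
    using assms(3) by (cases "p = a") auto
  then show thesis
    using IVT_strict[of p a "h b"] p assms(3) that by blast
qed

lemma hump_or_dip:
  assumes "a < b" "h a = h b"
  shows "hump h \<or> hump (\<lambda>t. - h t)"
proof -
  define c where "c = (a + b) / 2"
  have c: "a < c" "c < b"
    using assms by (auto simp: c_def)
  then have "h c \<noteq> h a"
    using no_triple_value[OF c] assms(2) by metis
  then have "h a < h c \<and> h b < h c \<or> - h a < - h c \<and> - h b < - h c"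
    using assms by auto
  then show ?thesis
    unfolding hump_def using c by blast
qed

lemma hump_imp_not_dip:
  assumes "hump h"
  shows "\<not> hump (\<lambda>t. - h t)"
proof
  assume "hump (\<lambda>t. - h t)"
  then obtain m' where m': "\<And>w. - h w \<le> - h m'"
    by (rule proper_two_to_one_fun.hump_imp_maximum[OF negate]) blast
  obtain m where "\<And>w. h w \<le> h m"
    using hump_imp_maximum assms by blast
  then obtain p where "h p < h m'"
    using below_far_right[of "h m" 0 "h m'"] by blast
  then show False
    using m'[of p] by simp
qed

lemma inj_imp_surj:
  assumes "inj h"
  shows "surj h"
proof -
  have "open (range h)"
    using injective_into_1d_imp_open_map_UNIV[OF open_UNIV continuous assms subset_refl] .
  moreover have "closed (range h)"
  proof (rule closed_image_proper_map[OF continuous _ closed_UNIV])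
    fix K :: "real set"
    assume "compact K"
    then obtain B where B: "\<forall>x \<in> K. norm x \<le> B"
      using compact_imp_bounded bounded_iff by blast
    have "K \<subseteq> {- B..B}"
    proof
      fix x
      assume "x \<in> K"
      then show "x \<in> {- B..B}"
        using B abs_le_iff by fastforce
    qed
    then have "bounded (h -` K)"
      using bounded_vimage_Icc[of "- B" B] bounded_subset vimage_mono by metis
    moreover have "closed (h -` K)"
      using continuous compact_imp_closed[OF \<open>compact K\<close>]
      unfolding continuous_on_closed_vimage[OF closed_UNIV] by simp
    ultimately show "compact (h -` K)"
      by (simp add: compact_eq_bounded_closed)
  qed
  moreover have "range h \<noteq> {}"
    by simp
  ultimately show ?thesis
    using clopen[of "range h"] by blast
qed

end

lemma open_hump_sections:
  fixes g :: "'a::topological_space \<times> real \<Rightarrow> real"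
  assumes "continuous_on UNIV g"
  shows "open {e. hump (\<lambda>t. g (e, t))}"
proof -
  have "{e. hump (\<lambda>t. g (e, t))} =
      (\<Union>(a, m, b) \<in> {(a, m, b). a < m \<and> m < b}. {e. g (e, a) < g (e, m)} \<inter> {e. g (e, b) < g (e, m)})"
    by (auto simp: hump_def)
  then show ?thesis
    by (auto intro!: open_Int open_Collect_less continuous_on_fixed_snd[OF assms])
qed

locale proper_fibre_map =
  fixes g :: "'a::real_normed_vector \<times> real \<Rightarrow> real"
  assumes continuous: "continuous_on UNIV g"
    and proper: "compact K \<Longrightarrow> compact (fibre_map g -` K)"
    and no_triple_value: "x < y \<Longrightarrow> y < z \<Longrightarrow> g (e, x) = g (e, y) \<Longrightarrow> g (e, y) = g (e, z) \<Longrightarrow> False"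
begin

lemma continuous_fibre_map: "continuous_on UNIV (fibre_map g)"
  unfolding fibre_map_eq by (intro continuous_intros continuous)

lemma closed_image: "closed C \<Longrightarrow> closed (fibre_map g ` C)"
  using closed_image_proper_map[OF continuous_fibre_map proper] .

lemma proper_two_to_one_section: "proper_two_to_one_fun (\<lambda>t. g (e, t))"
proof
  show "continuous_on UNIV (\<lambda>t. g (e, t))"
    by (rule continuous_on_fixed_fst[OF continuous])
  fix c d
  have "compact (fibre_map g -` ({e} \<times> {c..d}))"
    by (intro proper compact_Times compact_Icc) simp
  then have "bounded (snd ` (fibre_map g -` ({e} \<times> {c..d})))"
    by (intro compact_imp_bounded compact_continuous_image continuous_intros)
  moreover have "(\<lambda>t. g (e, t)) -` {c..d} \<subseteq> snd ` (fibre_map g -` ({e} \<times> {c..d}))"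
  proof
    fix t
    assume "t \<in> (\<lambda>t. g (e, t)) -` {c..d}"
    then have "(e, t) \<in> fibre_map g -` ({e} \<times> {c..d})"
      by simp
    then show "t \<in> snd ` (fibre_map g -` ({e} \<times> {c..d}))"
      by (rule rev_image_eqI) simp
  qed
  ultimately show "bounded ((\<lambda>t. g (e, t)) -` {c..d})"
    by (rule bounded_subset)
qed (rule no_triple_value)

sublocale fibre: proper_two_to_one_fun "\<lambda>t. g (e, t)" for e
  by (rule proper_two_to_one_section)

lemma negate: "proper_fibre_map (\<lambda>x. - g x)"
proof
  show "continuous_on UNIV (\<lambda>x. - g x)"
    by (intro continuous_intros continuous)
  fix K :: "('a \<times> real) set"
  assume "compact K"
  let ?flip = "fibre_map (\<lambda>x::'a \<times> real. - snd x)"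
  have "continuous_on UNIV ?flip"
    unfolding fibre_map_eq by (intro continuous_intros)
  then have "compact (?flip ` K)"
    using compact_continuous_image continuous_on_subset \<open>compact K\<close> by blast
  have flip_image: "y \<in> ?flip ` K \<longleftrightarrow> ?flip y \<in> K" for y
  proof
    assume "y \<in> ?flip ` K"
    then show "?flip y \<in> K"
      by auto
  next
    assume "?flip y \<in> K"
    then show "y \<in> ?flip ` K"
      by (rule rev_image_eqI) simp
  qed
  have "fibre_map (\<lambda>x. - g x) -` K = fibre_map g -` (?flip ` K)"
  proof (rule set_eqI)
    fix x
    show "x \<in> fibre_map (\<lambda>x. - g x) -` K \<longleftrightarrow> x \<in> fibre_map g -` (?flip ` K)"
      using flip_image[of "fibre_map g x"] by (simp add: fibre_map_negate[of g])
  qed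
  then show "compact (fibre_map (\<lambda>x. - g x) -` K)"
    using proper[OF \<open>compact (?flip ` K)\<close>] by simp
qed (use no_triple_value in simp)

text \<open>
  A hump near \<open>e\<close> would make the value at \<open>a\<close> recur beyond \<open>b\<close>; properness keeps such
  recurrence away from \<open>e\<close>, since the image of the half-space \<open>b \<le> t\<close> is closed.
\<close>

lemma not_hump_near_increasing:
  assumes "a < b" "g (e, a) < g (e, b)" "inj (\<lambda>t. g (e, t))"
  shows "\<exists>U. open U \<and> e \<in> U \<and> U \<subseteq> {e. \<not> hump (\<lambda>t. g (e, t))}"
proof -
  define U where "U = {e. g (e, a) < g (e, b)} \<inter> {e. (e, g (e, a)) \<notin> fibre_map g ` {x. b \<le> snd x}}"
  have "open U"
    unfolding U_def
    by (intro open_Int open_Collect_less open_Collect_neg closed_graph_vimage closed_image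
        closed_Collect_le continuous_on_fixed_snd[OF continuous] continuous_intros)
  moreover have "e \<in> U"
    using assms injD[OF assms(3)] by (fastforce simp: U_def)
  moreover have "U \<subseteq> {e. \<not> hump (\<lambda>t. g (e, t))}"
  proof (intro subsetI CollectI notI)
    fix e'
    assume "e' \<in> U" "hump (\<lambda>t. g (e', t))"
    then obtain c where "b < c" "g (e', c) = g (e', a)"
      using fibre.hump_imp_value_right[of e' a b] assms(1) by (auto simp: U_def)
    then have "(e', g (e', a)) \<in> fibre_map g ` {x. b \<le> snd x}"
      by (intro rev_image_eqI[of "(e', c)"]) auto
    then show False
      using \<open>e' \<in> U\<close> by (simp add: U_def)
  qed
  ultimately show ?thesis
    by blast
qed

lemma not_hump_near_decreasing:
  assumes "a < b" "g (e, b) < g (e, a)" "inj (\<lambda>t. g (e, t))"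
  shows "\<exists>U. open U \<and> e \<in> U \<and> U \<subseteq> {e. \<not> hump (\<lambda>t. g (e, t))}"
proof -
  define U where "U = {e. g (e, b) < g (e, a)} \<inter> {e. (e, g (e, b)) \<notin> fibre_map g ` {x. snd x \<le> a}}"
  have "open U"
    unfolding U_def
    by (intro open_Int open_Collect_less open_Collect_neg closed_graph_vimage closed_image
        closed_Collect_le continuous_on_fixed_snd[OF continuous] continuous_intros)
  moreover have "e \<in> U"
    using assms injD[OF assms(3)] by (fastforce simp: U_def)
  moreover have "U \<subseteq> {e. \<not> hump (\<lambda>t. g (e, t))}"
  proof (intro subsetI CollectI notI)
    fix e'
    assume "e' \<in> U" "hump (\<lambda>t. g (e', t))"
    then obtain c where "c < a" "g (e', c) = g (e', b)"
      using fibre.hump_imp_value_left[of e' a b] assms(1) by (auto simp: U_def)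
    then have "(e', g (e', b)) \<in> fibre_map g ` {x. snd x \<le> a}"
      by (intro rev_image_eqI[of "(e', c)"]) auto
    then show False
      using \<open>e' \<in> U\<close> by (simp add: U_def)
  qed
  ultimately show ?thesis
    by blast
qed

lemma not_hump_neighbourhood:
  assumes "\<not> hump (\<lambda>t. g (e, t))"
  shows "\<exists>U. open U \<and> e \<in> U \<and> U \<subseteq> {e. \<not> hump (\<lambda>t. g (e, t))}"
proof (cases "inj (\<lambda>t. g (e, t))")
  case False
  then obtain a b where "a < b" "g (e, a) = g (e, b)"
    unfolding inj_def by (metis linorder_neqE_linordered_idom)
  then have "hump (\<lambda>t. - g (e, t))"
    using fibre.hump_or_dip assms by blast
  moreover have "open {e. hump (\<lambda>t. - g (e, t))}"
    using open_hump_sections[of "\<lambda>x. - g x"] by (simp add: continuous_intros continuous)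
  moreover have "{e. hump (\<lambda>t. - g (e, t))} \<subseteq> {e. \<not> hump (\<lambda>t. g (e, t))}"
    using fibre.hump_imp_not_dip by blast
  ultimately show ?thesis
    by blast
next
  case True
  then have "g (e, 0) \<noteq> g (e, 1)"
    by (metis inj_eq zero_neq_one)
  then consider "g (e, 0) < g (e, 1)" | "g (e, 1) < g (e, 0)"
    by linarith
  then show ?thesis
    using not_hump_near_increasing[OF zero_less_one _ True] not_hump_near_decreasing[OF zero_less_one _ True]
    by cases
qed

lemma hump_everywhere:
  assumes "hump (\<lambda>t. g (e0, t))"
  shows "hump (\<lambda>t. g (e, t))"
proof -
  let ?H = "{e. hump (\<lambda>t. g (e, t))}"
  have "open ?H"
    by (rule open_hump_sections[OF continuous])
  moreover have "open {e. \<not> hump (\<lambda>t. g (e, t))}"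
    unfolding open_subopen[of "{e. \<not> hump (\<lambda>t. g (e, t))}"] using not_hump_neighbourhood by blast
  moreover have "?H \<noteq> {}"
    using assms by blast
  ultimately have "?H = UNIV"
    using clopen[of ?H] by (auto simp: closed_def Collect_neg_eq)
  then show ?thesis
    by blast
qed

lemma is_homeo_if_inj:
  assumes "inj (fibre_map g)"
  shows "is_homeo (fibre_map g)"
proof -
  have "y \<in> range (fibre_map g)" for y
  proof -
    obtain e v where y: "y = (e, v)"
      by fastforce
    have "inj (\<lambda>t. g (e, t))"
      using assms by (auto simp: inj_def)
    then obtain t where "v = g (e, t)"
      using surjD[OF fibre.inj_imp_surj] by blast
    then show "y \<in> range (fibre_map g)"
      using y by (intro rev_image_eqI[of "(e, t)"]) auto
  qed
  then have "bij (fibre_map g)"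
    using assms by (auto simp: bij_def)
  then show ?thesis
    using is_homeo_proper_bij continuous_fibre_map proper by blast
qed

end

lemma proper_fibre_mapI:
  fixes g :: "'a::real_normed_vector \<times> real \<Rightarrow> real"
  assumes "proper_cont_map (fibre_map g)"
    and "\<not> (\<exists>y x1 x2 x3. x1 \<noteq> x2 \<and> x1 \<noteq> x3 \<and> x2 \<noteq> x3 \<and>
            fibre_map g x1 = y \<and> fibre_map g x2 = y \<and> fibre_map g x3 = y)"
  shows "proper_fibre_map g"
proof
  show "continuous_on UNIV g"
    using continuous_on_snd[of UNIV "fibre_map g"] assms(1)
    by (simp add: proper_cont_map_def fibre_map_eq)
  show "compact K \<Longrightarrow> compact (fibre_map g -` K)" for K
    using assms(1) by (simp add: proper_cont_map_def)
  fix e :: 'a and x y z :: real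
  assume "x < y" "y < z" "g (e, x) = g (e, y)" "g (e, y) = g (e, z)"
  then have "(e, x) \<noteq> (e, y)" "(e, x) \<noteq> (e, z)" "(e, y) \<noteq> (e, z)"
    "fibre_map g (e, x) = fibre_map g (e, z)" "fibre_map g (e, y) = fibre_map g (e, z)"
    by auto
  then show False
    using assms(2)
    by (simp only: not_ex) (blast dest: spec[of _ "fibre_map g (e, z)"] spec[of _ "(e, x)"])
qed

section \<open>Normal form of a fold\<close>

locale folding_fibre_map = proper_fibre_map +
  assumes hump: "hump (\<lambda>t. g (e, t))"
begin

definition peak :: "'a \<Rightarrow> real" where
  "peak e = (SOME m. \<forall>w. g (e, w) \<le> g (e, m))"

definition peak_value :: "'a \<Rightarrow> real" where
  "peak_value e = g (e, peak e)"

lemma le_peak_value: "g (e, w) \<le> peak_value e"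
proof -
  obtain m where "\<And>w. g (e, w) \<le> g (e, m)"
    using fibre.hump_imp_maximum[OF hump] by blast
  then have "\<exists>m. \<forall>w. g (e, w) \<le> g (e, m)"
    by blast
  then have "\<forall>w. g (e, w) \<le> g (e, peak e)"
    unfolding peak_def by (rule someI_ex)
  then show ?thesis
    by (simp add: peak_value_def)
qed

lemma less_peak_value: "w \<noteq> peak e \<Longrightarrow> g (e, w) < peak_value e"
  using fibre.maximum_unique[OF le_peak_value[unfolded peak_value_def]] le_peak_value
  by (fastforce simp: peak_value_def order.order_iff_strict)

lemma value_below_peak:
  assumes "v < peak_value e"
  shows "\<exists>t < peak e. g (e, t) = v" "\<exists>t > peak e. g (e, t) = v"
  using fibre.value_below_maximum[OF le_peak_value[unfolded peak_value_def]] assms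
  by (simp_all add: peak_value_def)

lemma attains_iff_le_peak_value: "(\<exists>t. g (e, t) = v) \<longleftrightarrow> v \<le> peak_value e"
  using le_peak_value value_below_peak(1)[of v e] by (force simp: peak_value_def order.order_iff_strict)

lemma continuous_peak_value: "continuous_on UNIV peak_value"
proof -
  \<comment> \<open>lower semicontinuity: \<open>peak_value\<close> is a supremum of continuous functions\<close>
  have "open {e. a < peak_value e}" for a
  proof -
    have "{e. a < peak_value e} = (\<Union>t. {e. a < g (e, t)})"
      using le_peak_value by (force simp: peak_value_def intro: less_le_trans)
    then show ?thesis
      by (auto intro!: open_Collect_less continuous_on_fixed_snd[OF continuous] continuous_intros)
  qed
  \<comment> \<open>upper semicontinuity: the range of \<open>G\<close> is closed\<close>
  moreover have "open {e. peak_value e < a}" for a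
  proof -
    have "{e. peak_value e < a} = {e. \<not> (e, a) \<in> range (fibre_map g)}"
      by (auto simp: range_fibre_map_iff attains_iff_le_peak_value not_le)
    then show ?thesis
      by (auto intro!: open_Collect_neg closed_graph_vimage closed_image continuous_intros)
  qed
  ultimately show ?thesis
    using continuous_map_upper_lower_semicontinuous_lt[of euclidean peak_value] by simp
qed

lemma continuous_peak: "continuous_on UNIV peak"
  unfolding continuous_on_closed_vimage[OF closed_UNIV]
proof (intro allI impI)
  fix B :: "real set"
  assume "closed B"
  define S where "S = snd -` B \<inter> {x. g x = peak_value (fst x)}"
  have "closed S"
    unfolding S_def using \<open>closed B\<close>
    by (intro closed_Int closed_vimage_snd closed_Collect_eq continuous
        continuous_on_compose2[OF continuous_peak_value] continuous_intros) auto
  have "peak -` B = {e. (e, peak_value e) \<in> fibre_map g ` S}"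
  proof (intro set_eqI iffI)
    fix e
    assume "e \<in> peak -` B"
    then have "(e, peak e) \<in> S"
      by (simp add: S_def peak_value_def)
    then show "e \<in> {e. (e, peak_value e) \<in> fibre_map g ` S}"
      by (auto simp: peak_value_def intro: rev_image_eqI)
  next
    fix e
    assume "e \<in> {e. (e, peak_value e) \<in> fibre_map g ` S}"
    then obtain t where "(e, t) \<in> S" "g (e, t) = peak_value e"
      by (auto simp: fibre_map_eq)
    then show "e \<in> peak -` B"
      using less_peak_value[of t e] by (cases "t = peak e") (auto simp: S_def)
  qed
  then show "closed (peak -` B \<inter> UNIV)"
    using closed_graph_vimage[OF continuous_peak_value closed_image[OF \<open>closed S\<close>]] by simp
qed

definition fold_coordinate :: "'a \<times> real \<Rightarrow> real" where
  "fold_coordinate x =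
    (if snd x \<le> peak (fst x) then g x - peak_value (fst x) else peak_value (fst x) - g x)"

lemma fold_coordinate_abs: "g x = peak_value (fst x) - \<bar>fold_coordinate x\<bar>"
  using le_peak_value[of "fst x" "snd x"] by (auto simp: fold_coordinate_def)

lemma continuous_fold_coordinate: "continuous_on UNIV fold_coordinate"
proof -
  have peak_fst: "continuous_on UNIV (\<lambda>x::'a \<times> real. peak (fst x))"
    and peak_value_fst: "continuous_on UNIV (\<lambda>x::'a \<times> real. peak_value (fst x))"
    by (auto intro!: continuous_on_compose2[OF continuous_peak] continuous_on_compose2[OF continuous_peak_value]
        continuous_intros)
  have "continuous_on ({x. snd x \<le> peak (fst x)} \<union> {x. peak (fst x) \<le> snd x}) fold_coordinate"
    unfolding fold_coordinate_def
  proof (rule continuous_on_cases)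
    show "closed {x. snd x \<le> peak (fst x)}" "closed {x. peak (fst x) \<le> snd x}"
      by (intro closed_Collect_le continuous_intros peak_fst)+
    show "continuous_on {x. snd x \<le> peak (fst x)} (\<lambda>x. g x - peak_value (fst x))"
      "continuous_on {x. peak (fst x) \<le> snd x} (\<lambda>x. peak_value (fst x) - g x)"
      by (auto intro!: continuous_on_subset[OF continuous_on_diff] continuous peak_value_fst)
  qed (auto simp: peak_value_def)
  moreover have "{x. snd x \<le> peak (fst x)} \<union> {x. peak (fst x) \<le> snd x} = UNIV"
    by auto
  ultimately show ?thesis
    by simp
qed

lemma continuous_fold_chart: "continuous_on UNIV (fibre_map fold_coordinate)"
  unfolding fibre_map_eq by (intro continuous_intros continuous_fold_coordinate)

lemma strict_mono_fold_coordinate: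
  assumes "s < t"
  shows "fold_coordinate (e, s) < fold_coordinate (e, t)"
proof -
  note peak_maximum = le_peak_value[unfolded peak_value_def]
  consider "t \<le> peak e" | "s \<le> peak e" "peak e < t" | "peak e < s"
    by linarith
  then show ?thesis
  proof cases
    case 1
    then have "g (e, s) < g (e, t)"
      using monotone_onD[OF fibre.strict_mono_on_atMost[OF peak_maximum]] assms by simp
    then show ?thesis
      using 1 assms by (simp add: fold_coordinate_def)
  next
    case 2
    then show ?thesis
      using le_peak_value[of e s] less_peak_value[of t e] by (simp add: fold_coordinate_def)
  next
    case 3
    then have "g (e, t) < g (e, s)"
      using monotone_onD[OF fibre.strict_antimono_on_atLeast[OF peak_maximum]] assms by simp
    then show ?thesis
      using 3 assms by (simp add: fold_coordinate_def)
  qed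
qed

lemma fold_coordinate_attains: "\<exists>s. fold_coordinate (e, s) = t"
proof (cases t "0 :: real" rule: linorder_cases)
  case less
  then obtain s where "s < peak e" "g (e, s) = peak_value e + t"
    using value_below_peak(1)[of "peak_value e + t" e] by auto
  then show ?thesis
    by (intro exI[of _ s]) (simp add: fold_coordinate_def)
next
  case equal
  then show ?thesis
    by (auto simp: fold_coordinate_def peak_value_def)
next
  case greater
  then obtain s where "peak e < s" "g (e, s) = peak_value e - t"
    using value_below_peak(2)[of "peak_value e - t" e] by auto
  then show ?thesis
    by (intro exI[of _ s]) (simp add: fold_coordinate_def)
qed

lemma bij_fold_chart: "bij (fibre_map fold_coordinate)"
proof (rule bijI)
  show "inj (fibre_map fold_coordinate)"
  proof (rule injI)
    fix x y :: "'a \<times> real"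
    assume eq: "fibre_map fold_coordinate x = fibre_map fold_coordinate y"
    have "fst x = fst y"
      using eq by (simp add: fibre_map_eq)
    then obtain e s s' where xy: "x = (e, s)" "y = (e, s')"
      by (metis prod.collapse)
    then have "fold_coordinate (e, s) = fold_coordinate (e, s')"
      using eq by simp
    then show "x = y"
      using xy strict_mono_fold_coordinate[of s s' e] strict_mono_fold_coordinate[of s' s e]
      by (cases s s' rule: linorder_cases) auto
  qed
  have "(e, t) \<in> range (fibre_map fold_coordinate)" for e t
    using fold_coordinate_attains[of e t] by (simp add: range_fibre_map_iff)
  then show "surj (fibre_map fold_coordinate)"
    by (metis UNIV_eq_I surj_pair)
qed

lemma compact_vimage_fold_chart:
  assumes "compact K"
  shows "compact (fibre_map fold_coordinate -` K)"
proof -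
  let ?unfold = "fibre_map (\<lambda>y. peak_value (fst y) - \<bar>snd y\<bar>)"
  have "continuous_on UNIV (\<lambda>x::'a \<times> real. peak_value (fst x))"
    by (rule continuous_on_compose2[OF continuous_peak_value]) (auto intro: continuous_intros)
  then have "continuous_on UNIV ?unfold"
    unfolding fibre_map_eq by (intro continuous_intros)
  then have "compact (?unfold ` K)"
    using compact_continuous_image continuous_on_subset assms by blast
  then have compact: "compact (fibre_map g -` (?unfold ` K))"
    by (rule proper)
  have closed: "closed (fibre_map fold_coordinate -` K)"
    using continuous_fold_chart compact_imp_closed[OF assms]
    unfolding continuous_on_closed_vimage[OF closed_UNIV] by simp
  have "fibre_map fold_coordinate -` K \<subseteq> fibre_map g -` (?unfold ` K)"
  proof
    fix x
    assume "x \<in> fibre_map fold_coordinate -` K"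
    moreover have "fibre_map g x = ?unfold (fibre_map fold_coordinate x)"
      using fold_coordinate_abs[of x] by (simp add: fibre_map_eq)
    ultimately show "x \<in> fibre_map g -` (?unfold ` K)"
      by simp
  qed
  then show ?thesis
    using compact_Int_closed[OF compact closed] by (simp add: Int_absorb1)
qed

lemma is_homeo_fold_chart: "is_homeo (fibre_map fold_coordinate)"
  using is_homeo_proper_bij continuous_fold_chart compact_vimage_fold_chart bij_fold_chart by blast

lemma is_global_fold: "global_fold (fibre_map g)"
proof -
  obtain k where k: "homeomorphism UNIV UNIV (fibre_map fold_coordinate) k"
    using is_homeo_fold_chart unfolding is_homeo_def by blast
  define g1 where "g1 = (\<lambda>y. snd (k y))"
  have g1: "fibre_map g1 = k"
    using homeomorphism_fibre_map_inverse[OF k] by (simp add: g1_def)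
  then have "is_homeo (fibre_map g1)"
    using homeomorphism_sym k unfolding is_homeo_def by blast
  moreover have "is_homeo (fibre_map (\<lambda>y. snd y + - peak_value (fst y)))"
    by (intro is_homeo_fibre_map_translate continuous_intros continuous_peak_value)
  moreover have "(fibre_map (\<lambda>y. snd y + - peak_value (fst y)) \<circ> fibre_map g \<circ> fibre_map g1) (e, t)
      = (e, - \<bar>t\<bar>)" for e t
  proof -
    have "fibre_map fold_coordinate (k (e, t)) = (e, t)"
      using homeomorphism_apply2[OF k] by simp
    then have "fst (k (e, t)) = e" "fold_coordinate (k (e, t)) = t"
      by (simp_all add: fibre_map_eq)
    then show ?thesis
      using fold_coordinate_abs[of "k (e, t)"] g1 by (simp add: fibre_map_eq)
  qed
  ultimately show ?thesis
    unfolding global_fold_def by blast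
qed

end

section \<open>The dichotomy\<close>

context proper_fibre_map
begin

lemma global_fold_if_hump:
  assumes "hump (\<lambda>t. g (e, t))"
  shows "global_fold (fibre_map g)"
proof -
  interpret folding_fibre_map g
    by unfold_locales (rule hump_everywhere[OF assms])
  show ?thesis
    by (rule is_global_fold)
qed

lemma global_fold_if_not_inj:
  assumes "\<not> inj (fibre_map g)"
  shows "global_fold (fibre_map g)"
proof -
  obtain x y where "x \<noteq> y" "fibre_map g x = fibre_map g y"
    using assms unfolding inj_def by blast
  then obtain e s s' where "s \<noteq> s'" "g (e, s) = g (e, s')"
    by (cases x, cases y) (auto simp: fibre_map_eq)
  then obtain a b where "a < b" "g (e, a) = g (e, b)"
    by (metis linorder_neqE_linordered_idom)
  then consider "hump (\<lambda>t. g (e, t))" | "hump (\<lambda>t. - g (e, t))"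
    using fibre.hump_or_dip by blast
  then show ?thesis
  proof cases
    case 1
    then show ?thesis
      by (rule global_fold_if_hump)
  next
    case 2
    then show ?thesis
      using proper_fibre_map.global_fold_if_hump[OF negate] global_fold_negate by blast
  qed
qed

end

theorem proposition3p2:
  fixes g :: "'a::banach \<times> real \<Rightarrow> real"
  assumes "proper_cont_map (fibre_map g)"
    and "\<not> (\<exists>y x1 x2 x3. x1 \<noteq> x2 \<and> x1 \<noteq> x3 \<and> x2 \<noteq> x3 \<and>
            fibre_map g x1 = y \<and> fibre_map g x2 = y \<and> fibre_map g x3 = y)"
  shows "((\<exists>x1 x2. x1 \<noteq> x2 \<and> fibre_map g x1 = fibre_map g x2) \<longrightarrow> global_fold (fibre_map g))
       \<and> (\<not> (\<exists>x1 x2. x1 \<noteq> x2 \<and> fibre_map g x1 = fibre_map g x2) \<longrightarrow> is_homeo (fibre_map g))"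
proof -
  interpret proper_fibre_map g
    using assms by (rule proper_fibre_mapI)
  have "inj (fibre_map g) \<longleftrightarrow> \<not> (\<exists>x1 x2. x1 \<noteq> x2 \<and> fibre_map g x1 = fibre_map g x2)"
    unfolding inj_def by blast
  then show ?thesis
    using global_fold_if_not_inj is_homeo_if_inj by blast
qed

end
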